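(* Let data $(\bm u^{\mathrm d}(t),\bm y^{\mathrm d}(t))_{t=0}^{T-1}$, $T>1$, each belong to $\mathscr{B}_{\mathrm{DF}}$, and let $H\doteq\begin{bmatrix}\bm u^{\mathrm d}(0) & \cdots & \bm u^{\mathrm d}(T-1)\\ \bm y^{\mathrm d}(0) & \cdots & \bm y^{\mathrm d}(T-1)\end{bmatrix}\in\mathbb{R}^{(6n+1)\times T}$ satisfy $\operatorname{rank}H=3n+1$. Fix $p_\bullet,q_\bullet\in\mathbb{R}^n$ and consider the problem $$\min_{p,q,P,Q,\ell,\mathsf v,\mathsf v_0,g}\ \mathbf 1^\top\ell$$ subject to $\mathsf v\ge 0$, $\mathsf v_0=1$, $\begin{bmatrix}u\\ y\end{bmatrix}=Hg$ with $u=(p,q)$, $y=(P,Q,\ell,\mathsf v,\mathsf v_0)$, $g\in\mathbb{R}^T$; $p\le p_\bullet$ and $q\le q_\bullet$ componentwise; and $P_i^2+Q_i^2\le\mathsf v_i\ell_i$ for all $i\in\mathcal N_+$. Then every optimal solution $(p^\star,q^\star,P^\star,Q^\star,\ell^\star,\mathsf v^\star,\mathsf v_0^\star,g^\star)$ satisfies $P^\star\odot P^\star+Q^\star\odot Q^\star=\mathsf v^\star\odot\ell^\star$, i.e. $(P_i^\star)^2+(Q_i^\star)^2=\mathsf v_i^\star\ell_i^\star$ for all $i\in\mathcal N_+$.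
   Context: Network: a tree with nodes $\mathcal N=\{0,1,\dots,n\}$ rooted at the slack node $0$; $\mathcal N_+=\{1,\dots,n\}$. Each $i\in\mathcal N_+$ has a unique parent $\pi(i)\in\mathcal N$, and the edge $(i,\pi(i))$ carries resistance $\mathtt r_i\ge 0$ and reactance $\mathtt x_i\ge0$ with $\mathtt r_i^2+\mathtt x_i^2\neq 0$. Variables: $p,q,P,Q,\ell,\mathsf v\in\mathbb{R}^n$ indexed by $\mathcal N_+$, and $\mathsf v_0\in\mathbb{R}$. The DistFlow equations are, for every $i\in\mathcal N_+$ with $j=\pi(i)$: (1) $P_i=p_i+\sum_{k:\pi(k)=i}(P_k-\mathtt r_k\ell_k)$; (2) $Q_i=q_i+\sum_{k:\pi(k)=i}(Q_k-\mathtt x_k\ell_k)$; (3) $\mathsf v_j=\mathsf v_i-2(\mathtt r_iP_i+\mathtt x_iQ_i)+(\mathtt r_i^2+\mathtt x_i^2)\ell_i$ (with $\mathsf v_j=\mathsf v_0$ when $j=0$); (4) $\ell_i\mathsf v_i=P_i^2+Q_i^2$. Input $u=(p,q)\in\mathbb{R}^{2n}$, output $y=(P,Q,\ell,\mathsf v,\mathsf v_0)\in\mathbb{R}^{4n+1}$ (vertical stacking in this order). $\mathscr{B}_{\mathrm{DF}}$ is the set of all $(u,y)$ satisfying (1)–(4). $\odot$ is the element-wise product and $\mathbf 1$ the all-ones vector. *)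

theory Defs
  imports Complex_Main
begin

text \<open>A point (u,y) of the DistFlow behaviour: u = (p,q), y = (P,Q,l,v,v0).
  Vectors in R^n are functions on nat, only the indices 1..n being relevant.\<close>
record df_point =
  dp :: "nat \<Rightarrow> real"
  dq :: "nat \<Rightarrow> real"
  dP :: "nat \<Rightarrow> real"
  dQ :: "nat \<Rightarrow> real"
  dl :: "nat \<Rightarrow> real"
  dv :: "nat \<Rightarrow> real"
  dv0 :: real

definition is_tree :: "nat \<Rightarrow> (nat \<Rightarrow> nat) \<Rightarrow> bool" where
  "is_tree n par \<longleftrightarrow> (\<forall>i\<in>{1..n}. par i \<le> n \<and> (\<exists>k. (par ^^ k) i = 0))"

definition volt :: "df_point \<Rightarrow> nat \<Rightarrow> real" where
  "volt z j = (if j = 0 then dv0 z else dv z j)"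

definition in_BDF :: "nat \<Rightarrow> (nat \<Rightarrow> nat) \<Rightarrow> (nat \<Rightarrow> real) \<Rightarrow> (nat \<Rightarrow> real)
    \<Rightarrow> df_point \<Rightarrow> bool" where
  "in_BDF n par r x z \<longleftrightarrow> (\<forall>i\<in>{1..n}.
     dP z i = dp z i + (\<Sum>k\<in>{k\<in>{1..n}. par k = i}. dP z k - r k * dl z k) \<and>
     dQ z i = dq z i + (\<Sum>k\<in>{k\<in>{1..n}. par k = i}. dQ z k - x k * dl z k) \<and>
     volt z (par i) = dv z i - 2 * (r i * dP z i + x i * dQ z i) + ((r i)\<^sup>2 + (x i)\<^sup>2) * dl z i \<and>
     dl z i * dv z i = (dP z i)\<^sup>2 + (dQ z i)\<^sup>2)"

definition stack :: "nat \<Rightarrow> df_point \<Rightarrow> nat \<Rightarrow> real" where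
  "stack n z r =
    (if r < n then dp z (r + 1)
     else if r < 2*n then dq z (r - n + 1)
     else if r < 3*n then dP z (r - 2*n + 1)
     else if r < 4*n then dQ z (r - 3*n + 1)
     else if r < 5*n then dl z (r - 4*n + 1)
     else if r < 6*n then dv z (r - 5*n + 1)
     else dv0 z)"

text \<open>Rank (column rank) of the m x T matrix with columns col 0, ..., col (T-1),
  where column t has entries col t 0, ..., col t (m-1).\<close>
definition cols_lin_indep :: "nat \<Rightarrow> (nat \<Rightarrow> nat \<Rightarrow> real) \<Rightarrow> nat set \<Rightarrow> bool" where
  "cols_lin_indep m col S \<longleftrightarrow>
     (\<forall>c. (\<forall>r<m. (\<Sum>t\<in>S. c t * col t r) = 0) \<longrightarrow> (\<forall>t\<in>S. c t = 0))"

definition mat_rank :: "nat \<Rightarrow> nat \<Rightarrow> (nat \<Rightarrow> nat \<Rightarrow> real) \<Rightarrow> nat" where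
  "mat_rank m T col = Max {card S | S. S \<subseteq> {..<T} \<and> cols_lin_indep m col S}"

definition feasible :: "nat \<Rightarrow> nat \<Rightarrow> (nat \<Rightarrow> df_point) \<Rightarrow> (nat \<Rightarrow> real) \<Rightarrow> (nat \<Rightarrow> real)
    \<Rightarrow> df_point \<Rightarrow> (nat \<Rightarrow> real) \<Rightarrow> bool" where
  "feasible n T d pb qb z g \<longleftrightarrow>
     (\<forall>i\<in>{1..n}. dv z i \<ge> 0) \<and> dv0 z = 1 \<and>
     (\<forall>r<6*n+1. stack n z r = (\<Sum>t<T. g t * stack n (d t) r)) \<and>
     (\<forall>i\<in>{1..n}. dp z i \<le> pb i \<and> dq z i \<le> qb i) \<and>
     (\<forall>i\<in>{1..n}. (dP z i)\<^sup>2 + (dQ z i)\<^sup>2 \<le> dv z i * dl z i)"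

definition objective :: "nat \<Rightarrow> df_point \<Rightarrow> real" where
  "objective n z = (\<Sum>i=1..n. dl z i)"

end

theory Submission
  imports Defs "HOL-Library.Function_Algebras"
begin

text \<open>Suppose an optimal point is strictly inside the cone at edge \<open>i\<close>. Lower the loss
  \<open>\<ell>\<^sub>i\<close> by a small \<open>e > 0\<close>, the flows \<open>P\<^sub>i, Q\<^sub>i\<close> by \<open>r\<^sub>i e/2, x\<^sub>i e/2\<close>, and the
  injections \<open>p, q\<close> at \<open>i\<close> and at its parent by the same amounts. This change solves the linear
  equations (1)--(3), keeps \<open>p \<le> p\<^sub>\<bullet>, q \<le> q\<^sub>\<bullet>\<close> and, for small \<open>e\<close>, the cone constraint.
  A solution of (1)--(3) is determined by its \<open>(p, q, \<ell>, v\<^sub>0)\<close>, found by summing up the tree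
  for \<open>P, Q\<close> and then descending it for \<open>v\<close>; so these solutions form a space of dimension
  \<open>3n+1\<close>. It contains the data, and \<open>rank H = 3n+1\<close> makes the columns of \<open>H\<close> span it. Hence
  the perturbed point is again of the form \<open>H g\<close>: it is feasible with objective smaller by \<open>e\<close>.\<close>

interpretation fun_space: vector_space "\<lambda>(c::real) (f::'a \<Rightarrow> real) i. c * f i"
  by unfold_locales (auto simp: fun_eq_iff algebra_simps)

lemma sum_fun_apply: "(\<Sum>x\<in>A. F x) i = (\<Sum>x\<in>A. F x i)"
  by (induction A rule: infinite_finite_induct) auto

lemma independent_columns_span:
  fixes col :: "'t \<Rightarrow> 'a \<Rightarrow> real"
  assumes fin: "finite S" "finite J" and card: "card S = card J"
    and indep: "\<forall>c. (\<forall>j\<in>J. (\<Sum>t\<in>S. c t * col t j) = 0) \<longrightarrow> (\<forall>t\<in>S. c t = 0)"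
  shows "\<exists>c. \<forall>j\<in>J. b j = (\<Sum>t\<in>S. c t * col t j)"
proof -
  define cut where "cut f = (\<lambda>j. if j \<in> J then f j else 0)" for f :: "'a \<Rightarrow> real"
  define unit where "unit j = (\<lambda>i. if i = j then 1 else 0 :: real)" for j :: 'a
  define B where "B = (\<lambda>t. cut (col t)) ` S"
  have cut_unit_sum: "cut f = (\<Sum>j\<in>J. (\<lambda>i. f j * unit j i))" for f
    by (auto simp: fun_eq_iff sum_fun_apply cut_def unit_def if_distrib[of "(*) _"] fin
        cong: if_cong)
  have span_cut: "cut f \<in> fun_space.span (unit ` J)" for f
    unfolding cut_unit_sum[of f]
    by (intro fun_space.span_sum fun_space.span_scale fun_space.span_base) auto
  have inj: "inj_on (\<lambda>t. cut (col t)) S"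
  proof (rule inj_onI, rule ccontr)
    fix s t assume st: "s \<in> S" "t \<in> S" "cut (col s) = cut (col t)" "s \<noteq> t"
    define c where "c u = (if u = s then 1 else if u = t then -1 else 0 :: real)" for u
    have "(\<Sum>u\<in>S. c u * col u j) = col s j - col t j" for j
      using st fin by (simp add: c_def if_distrib[of "\<lambda>x. x * _"] sum.If_cases)
    moreover have "col s j = col t j" if "j \<in> J" for j
      using fun_cong[OF st(3), of j] that by (simp add: cut_def)
    ultimately have "\<forall>j\<in>J. (\<Sum>u\<in>S. c u * col u j) = 0" by simp
    then show False using indep st by (force simp: c_def)
  qed
  have eval_B: "(\<Sum>w\<in>B. (\<lambda>i. u w * w i)) j = (\<Sum>t\<in>S. u (cut (col t)) * col t j)"
    if "j \<in> J" for u j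
    using that unfolding B_def sum_fun_apply sum.reindex[OF inj] by (simp add: cut_def)
  have indep_B: "fun_space.independent B"
  proof (rule fun_space.independent_if_scalars_zero)
    show "finite B" using fin by (simp add: B_def)
    fix f w assume zero: "(\<Sum>w\<in>B. (\<lambda>i. f w * w i)) = 0" and w: "w \<in> B"
    have "\<forall>j\<in>J. (\<Sum>t\<in>S. f (cut (col t)) * col t j) = 0"
      using eval_B[of _ f] zero by (simp add: zero_fun_def)
    with indep w show "f w = 0" by (auto simp: B_def)
  qed
  have "cut b \<in> fun_space.span B"
  proof (rule ccontr)
    assume b: "cut b \<notin> fun_space.span B"
    then have "fun_space.independent (insert (cut b) B)"
      using indep_B by (rule fun_space.independent_insertI)
    moreover have "insert (cut b) B \<subseteq> fun_space.span (unit ` J)"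
      using span_cut by (auto simp: B_def)
    ultimately have "card (insert (cut b) B) \<le> card (unit ` J)"
      using fun_space.independent_span_bound fin by blast
    moreover have "card (insert (cut b) B) = Suc (card J)"
    proof -
      have "cut b \<notin> B" using b fun_space.span_base by blast
      then show ?thesis using card card_image[OF inj] fin by (simp add: B_def)
    qed
    moreover have "card (unit ` J) \<le> card J" by (rule card_image_le) (rule fin)
    ultimately show False by linarith
  qed
  then obtain u where u: "cut b = (\<Sum>w\<in>B. (\<lambda>i. u w * w i))"
    using fun_space.span_finite[of B] fin by (auto simp: B_def)
  show ?thesis
  proof (intro exI ballI)
    fix j assume "j \<in> J"
    then show "b j = (\<Sum>t\<in>S. u (cut (col t)) * col t j)"
      using fun_cong[OF u, of j] eval_B by (simp add: cut_def)
  qed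
qed

definition depth :: "(nat \<Rightarrow> nat) \<Rightarrow> nat \<Rightarrow> nat" where
  "depth par i = (LEAST k. (par ^^ k) i = 0)"

lemma depth_parent:
  assumes tree: "is_tree n par" and i: "i \<in> {1..n}"
  shows "depth par i = Suc (depth par (par i))"
proof -
  obtain k where k: "(par ^^ k) i = 0" using tree i unfolding is_tree_def by blast
  have root: "(par ^^ depth par i) i = 0" unfolding depth_def using k by (rule LeastI)
  moreover have "depth par i \<noteq> 0"
    using root i by (metis funpow_0 atLeastAtMost_iff not_one_le_zero)
  ultimately obtain m where m: "depth par i = Suc m" "(par ^^ m) (par i) = 0"
    by (metis comp_apply funpow_Suc_right not0_implies_Suc)
  then have "depth par (par i) \<le> m" unfolding depth_def by (intro Least_le)
  moreover have "(par ^^ Suc (depth par (par i))) i = 0"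
    unfolding funpow_Suc_right comp_apply depth_def using m(2) by (rule LeastI)
  then have "depth par i \<le> Suc (depth par (par i))" unfolding depth_def by (rule Least_le)
  ultimately show ?thesis using m(1) by simp
qed

lemma tree_induct_from_leaves [consumes 2, case_names step]:
  assumes tree: "is_tree n par" and i: "i \<in> {1..n}"
    and step: "\<And>i. i \<in> {1..n} \<Longrightarrow> (\<And>k. k \<in> {1..n} \<Longrightarrow> par k = i \<Longrightarrow> P k) \<Longrightarrow> P i"
  shows "P i"
proof -
  define D where "D = Max (depth par ` {1..n})"
  have "i \<in> {1..n} \<longrightarrow> P i"
  proof (induction i rule: measure_induct_rule[where f = "\<lambda>i. D - depth par i"])
    case (less i)
    have "D - depth par k < D - depth par i" if "k \<in> {1..n}" "par k = i" for k
    proof -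
      have "depth par k \<le> D" unfolding D_def using that(1) by simp
      then show ?thesis using depth_parent[OF tree that(1)] that(2) by simp
    qed
    with less step show ?case by blast
  qed
  with i show ?thesis by blast
qed

lemma tree_induct_from_root [consumes 2, case_names step]:
  assumes tree: "is_tree n par" and i: "i \<in> {1..n}"
    and step: "\<And>i. i \<in> {1..n} \<Longrightarrow> (par i \<in> {1..n} \<Longrightarrow> P (par i)) \<Longrightarrow> P i"
  shows "P i"
proof -
  have "i \<in> {1..n} \<longrightarrow> P i"
  proof (induction i rule: measure_induct_rule[where f = "depth par"])
    case (less i)
    with step depth_parent[OF tree] show ?case by (metis lessI)
  qed
  with i show ?thesis by blast
qed

lemma parent_neq:
  assumes "is_tree n par" "i \<in> {1..n}"
  shows "par i \<noteq> i"
  using depth_parent[OF assms] by (metis n_not_Suc_n)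

definition in_lin_BDF :: "nat \<Rightarrow> (nat \<Rightarrow> nat) \<Rightarrow> (nat \<Rightarrow> real) \<Rightarrow> (nat \<Rightarrow> real)
    \<Rightarrow> df_point \<Rightarrow> bool" where
  "in_lin_BDF n par r x z \<longleftrightarrow> (\<forall>i\<in>{1..n}.
     dP z i = dp z i + (\<Sum>k\<in>{k\<in>{1..n}. par k = i}. dP z k - r k * dl z k) \<and>
     dQ z i = dq z i + (\<Sum>k\<in>{k\<in>{1..n}. par k = i}. dQ z k - x k * dl z k) \<and>
     volt z (par i) = dv z i - 2 * (r i * dP z i + x i * dQ z i) + ((r i)\<^sup>2 + (x i)\<^sup>2) * dl z i)"

lemma in_BDF_imp_in_lin_BDF: "in_BDF n par r x z \<Longrightarrow> in_lin_BDF n par r x z"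
  unfolding in_BDF_def in_lin_BDF_def by blast

definition df_comb :: "(nat \<Rightarrow> real) \<Rightarrow> nat set \<Rightarrow> (nat \<Rightarrow> df_point) \<Rightarrow> df_point" where
  "df_comb c S d = \<lparr>dp = \<lambda>i. \<Sum>t\<in>S. c t * dp (d t) i, dq = \<lambda>i. \<Sum>t\<in>S. c t * dq (d t) i,
     dP = \<lambda>i. \<Sum>t\<in>S. c t * dP (d t) i, dQ = \<lambda>i. \<Sum>t\<in>S. c t * dQ (d t) i,
     dl = \<lambda>i. \<Sum>t\<in>S. c t * dl (d t) i, dv = \<lambda>i. \<Sum>t\<in>S. c t * dv (d t) i,
     dv0 = \<Sum>t\<in>S. c t * dv0 (d t)\<rparr>"

definition df_diff :: "df_point \<Rightarrow> df_point \<Rightarrow> df_point" where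
  "df_diff a b = \<lparr>dp = \<lambda>i. dp a i - dp b i, dq = \<lambda>i. dq a i - dq b i,
     dP = \<lambda>i. dP a i - dP b i, dQ = \<lambda>i. dQ a i - dQ b i,
     dl = \<lambda>i. dl a i - dl b i, dv = \<lambda>i. dv a i - dv b i, dv0 = dv0 a - dv0 b\<rparr>"

lemma stack_df_comb: "stack n (df_comb c S d) j = (\<Sum>t\<in>S. c t * stack n (d t) j)"
  unfolding stack_def df_comb_def by simp

lemma stack_df_diff: "stack n (df_diff a b) j = stack n a j - stack n b j"
  unfolding stack_def df_diff_def by simp

lemma volt_df_comb: "volt (df_comb c S d) j = (\<Sum>t\<in>S. c t * volt (d t) j)"
  unfolding volt_def df_comb_def by simp

lemma in_lin_BDF_df_comb:
  assumes lin: "\<forall>t\<in>S. in_lin_BDF n par r x (d t)"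
  shows "in_lin_BDF n par r x (df_comb c S d)"
  unfolding in_lin_BDF_def
proof (intro ballI conjI)
  fix i assume i: "i \<in> {1..n}"
  let ?K = "{k\<in>{1..n}. par k = i}" and ?z = "df_comb c S d"
  have balance: "(\<Sum>t\<in>S. c t * (f t + (\<Sum>k\<in>?K. g t k - a k * h t k)))
      = (\<Sum>t\<in>S. c t * f t) + (\<Sum>k\<in>?K. (\<Sum>t\<in>S. c t * g t k) - a k * (\<Sum>t\<in>S. c t * h t k))"
    for f :: "nat \<Rightarrow> real" and g h a
    by (simp add: sum.distrib sum_distrib_left sum_subtractf algebra_simps sum.swap[of _ S])
  have "dP ?z i = (\<Sum>t\<in>S. c t * (dp (d t) i + (\<Sum>k\<in>?K. dP (d t) k - r k * dl (d t) k)))"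
    using lin i by (auto simp: df_comb_def in_lin_BDF_def intro!: sum.cong)
  then show "dP ?z i = dp ?z i + (\<Sum>k\<in>?K. dP ?z k - r k * dl ?z k)"
    unfolding balance by (simp add: df_comb_def)
  have "dQ ?z i = (\<Sum>t\<in>S. c t * (dq (d t) i + (\<Sum>k\<in>?K. dQ (d t) k - x k * dl (d t) k)))"
    using lin i by (auto simp: df_comb_def in_lin_BDF_def intro!: sum.cong)
  then show "dQ ?z i = dq ?z i + (\<Sum>k\<in>?K. dQ ?z k - x k * dl ?z k)"
    unfolding balance by (simp add: df_comb_def)
  have "volt ?z (par i) = (\<Sum>t\<in>S. c t * (dv (d t) i - 2 * (r i * dP (d t) i + x i * dQ (d t) i)
      + ((r i)\<^sup>2 + (x i)\<^sup>2) * dl (d t) i))"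
    unfolding volt_df_comb using lin i by (auto simp: in_lin_BDF_def intro!: sum.cong)
  then show "volt ?z (par i)
      = dv ?z i - 2 * (r i * dP ?z i + x i * dQ ?z i) + ((r i)\<^sup>2 + (x i)\<^sup>2) * dl ?z i"
    by (simp add: df_comb_def sum.distrib sum_distrib_left sum_subtractf algebra_simps)
qed

lemma df_diff_eq_df_comb:
  "df_diff a b = df_comb (\<lambda>t. if t = 0 then 1 else -1) {0, 1} (\<lambda>t. if t = 0 then a else b)"
  by (simp add: df_diff_def df_comb_def)

lemma in_lin_BDF_df_diff:
  assumes "in_lin_BDF n par r x a" "in_lin_BDF n par r x b"
  shows "in_lin_BDF n par r x (df_diff a b)"
  unfolding df_diff_eq_df_comb using assms by (intro in_lin_BDF_df_comb) auto

text \<open>The rows of \<^const>\<open>stack\<close> holding \<open>p\<close>, \<open>q\<close>, \<open>\<ell>\<close> and \<open>v\<^sub>0\<close>.\<close>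

definition free_rows :: "nat \<Rightarrow> nat set" where
  "free_rows n = {..<2*n} \<union> {4*n..<5*n} \<union> {6*n}"

lemma card_free_rows: "card (free_rows n) = 3*n + 1"
  unfolding free_rows_def by (subst card_Un_disjoint; auto)+

lemma free_rows_zero:
  assumes "\<forall>j\<in>free_rows n. stack n w j = 0"
  shows "\<forall>i\<in>{1..n}. dp w i = 0 \<and> dq w i = 0 \<and> dl w i = 0" and "dv0 w = 0"
proof -
  show "\<forall>i\<in>{1..n}. dp w i = 0 \<and> dq w i = 0 \<and> dl w i = 0"
  proof
    fix i assume i: "i \<in> {1..n}"
    obtain k where k: "i = Suc k" "k < n" using i by (cases i) auto
    then have "{k, n + k, 4*n + k} \<subseteq> free_rows n" by (auto simp: free_rows_def)
    then have "stack n w k = 0" "stack n w (n + k) = 0" "stack n w (4*n + k) = 0"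
      using assms by auto
    then show "dp w i = 0 \<and> dq w i = 0 \<and> dl w i = 0"
      using k by (simp add: stack_def)
  qed
  show "dv0 w = 0" using assms by (simp add: free_rows_def stack_def)
qed

lemma in_lin_BDF_stack_zero:
  assumes tree: "is_tree n par" and lin: "in_lin_BDF n par r x w"
    and free: "\<forall>j\<in>free_rows n. stack n w j = 0"
  shows "stack n w j = 0"
proof -
  note eqs = lin[unfolded in_lin_BDF_def, rule_format]
  note zero = free_rows_zero[OF free]
  have P: "dP w i = 0" if "i \<in> {1..n}" for i
    using tree that
  proof (induction rule: tree_induct_from_leaves)
    case (step i)
    then show ?case using eqs[OF step(1)] zero by (simp add: sum.neutral)
  qed
  have Q: "dQ w i = 0" if "i \<in> {1..n}" for i
    using tree that
  proof (induction rule: tree_induct_from_leaves)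
    case (step i)
    then show ?case using eqs[OF step(1)] zero by (simp add: sum.neutral)
  qed
  have V: "dv w i = 0" if "i \<in> {1..n}" for i
    using tree that
  proof (induction rule: tree_induct_from_root)
    case (step i)
    have "par i \<le> n" using tree step(1) by (simp add: is_tree_def)
    then have "volt w (par i) = 0" using step zero by (auto simp: volt_def)
    then show ?case using eqs[OF step(1)] zero P Q step(1) by simp
  qed
  show ?thesis
    using zero P Q V by (auto simp: stack_def)
qed

lemma mat_rank_witness:
  assumes "mat_rank m T col = k"
  shows "\<exists>S\<subseteq>{..<T}. cols_lin_indep m col S \<and> card S = k"
proof -
  let ?R = "{card S | S. S \<subseteq> {..<T} \<and> cols_lin_indep m col S}"
  have "?R \<subseteq> card ` Pow {..<T}" by auto
  then have "finite ?R" by (rule finite_subset) simp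
  moreover have "card {} \<in> ?R"
    by (rule CollectI, rule exI[of _ "{}"]) (simp add: cols_lin_indep_def)
  ultimately have "Max ?R \<in> ?R" by (intro Max_in) auto
  then show ?thesis using assms by (auto simp: mat_rank_def)
qed

lemma in_lin_BDF_in_data_span:
  assumes tree: "is_tree n par"
    and data: "\<forall>t<T. in_lin_BDF n par r x (d t)"
    and rank: "mat_rank (6*n+1) T (\<lambda>t. stack n (d t)) = 3*n+1"
    and lin: "in_lin_BDF n par r x w"
  shows "\<exists>h. \<forall>j<6*n+1. stack n w j = (\<Sum>t<T. h t * stack n (d t) j)"
proof -
  obtain S where S: "S \<subseteq> {..<T}" "cols_lin_indep (6*n+1) (\<lambda>t. stack n (d t)) S" "card S = 3*n+1"
    using mat_rank_witness[OF rank] by blast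
  have fin: "finite S" using S(1) finite_subset by blast
  have lin_S: "\<forall>t\<in>S. in_lin_BDF n par r x (d t)" using S(1) data by auto
  have indep: "\<forall>c. (\<forall>j\<in>free_rows n. (\<Sum>t\<in>S. c t * stack n (d t) j) = 0) \<longrightarrow> (\<forall>t\<in>S. c t = 0)"
  proof (intro allI impI)
    fix c assume "\<forall>j\<in>free_rows n. (\<Sum>t\<in>S. c t * stack n (d t) j) = 0"
    then have "stack n (df_comb c S d) j = 0" for j
      using in_lin_BDF_stack_zero[OF tree in_lin_BDF_df_comb[OF lin_S]] by (simp add: stack_df_comb)
    then show "\<forall>t\<in>S. c t = 0" using S(2) by (simp add: cols_lin_indep_def stack_df_comb)
  qed
  have "finite (free_rows n)" by (simp add: free_rows_def)
  moreover have "card S = card (free_rows n)" using S(3) card_free_rows by simp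
  ultimately obtain c where c: "\<forall>j\<in>free_rows n. stack n w j = (\<Sum>t\<in>S. c t * stack n (d t) j)"
    using independent_columns_span[OF fin _ _ indep, of "stack n w"] by blast
  have "stack n (df_diff w (df_comb c S d)) j = 0" for j
    using in_lin_BDF_stack_zero[OF tree in_lin_BDF_df_diff[OF lin in_lin_BDF_df_comb[OF lin_S]]] c
    by (simp add: stack_df_diff stack_df_comb)
  then have "stack n w j = (\<Sum>t\<in>S. c t * stack n (d t) j)" for j
    by (simp add: stack_df_diff stack_df_comb)
  moreover have "(\<Sum>t\<in>S. c t * f t) = (\<Sum>t<T. (if t \<in> S then c t else 0) * f t)" for f :: "nat \<Rightarrow> real"
    using S(1) by (simp add: sum.If_cases Int_absorb1 if_distrib[of "\<lambda>a. a * _"])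
  ultimately show ?thesis by auto
qed

definition loss_shift :: "(nat \<Rightarrow> nat) \<Rightarrow> (nat \<Rightarrow> real) \<Rightarrow> (nat \<Rightarrow> real) \<Rightarrow> nat \<Rightarrow> real
    \<Rightarrow> df_point" where
  "loss_shift par r x i e =
    \<lparr>dp = \<lambda>k. if k = i \<or> k = par i then r i * e / 2 else 0,
     dq = \<lambda>k. if k = i \<or> k = par i then x i * e / 2 else 0,
     dP = \<lambda>k. if k = i then r i * e / 2 else 0,
     dQ = \<lambda>k. if k = i then x i * e / 2 else 0,
     dl = \<lambda>k. if k = i then e else 0,
     dv = \<lambda>k. 0, dv0 = 0\<rparr>"

text \<open>Lowering \<open>\<ell>\<^sub>i\<close> by \<open>e\<close> and \<open>P\<^sub>i\<close> by \<open>r\<^sub>i e/2\<close> raises \<open>P\<^sub>i - r\<^sub>i \<ell>\<^sub>i\<close> by \<open>r\<^sub>i e/2\<close>, which the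
  lowered \<open>p\<close> at the parent absorbs; the voltage drop (3) is unchanged because
  \<open>2 (r\<^sub>i r\<^sub>i e/2 + x\<^sub>i x\<^sub>i e/2) = (r\<^sub>i\<^sup>2 + x\<^sub>i\<^sup>2) e\<close>.\<close>

lemma in_lin_BDF_loss_shift:
  assumes tree: "is_tree n par" and i: "i \<in> {1..n}"
  shows "in_lin_BDF n par r x (loss_shift par r x i e)"
  unfolding in_lin_BDF_def
proof (intro ballI conjI)
  fix k assume k: "k \<in> {1..n}"
  let ?K = "{m\<in>{1..n}. par m = k}" and ?s = "loss_shift par r x i e"
  have delta: "(\<Sum>m\<in>?K. if m = i then c else 0) = (if par i = k then c else 0)" for c :: real
    using i by simp
  have "(\<Sum>m\<in>?K. dP ?s m - r m * dl ?s m) = (if par i = k then - (r i * e / 2) else 0)"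
    and "(\<Sum>m\<in>?K. dQ ?s m - x m * dl ?s m) = (if par i = k then - (x i * e / 2) else 0)"
    unfolding delta[symmetric] by (rule sum.cong; simp add: loss_shift_def)+
  then show "dP ?s k = dp ?s k + (\<Sum>m\<in>?K. dP ?s m - r m * dl ?s m)"
    and "dQ ?s k = dq ?s k + (\<Sum>m\<in>?K. dQ ?s m - x m * dl ?s m)"
    using parent_neq[OF tree i] by (auto simp: loss_shift_def)
  show "volt ?s (par k)
      = dv ?s k - 2 * (r k * dP ?s k + x k * dQ ?s k) + ((r k)\<^sup>2 + (x k)\<^sup>2) * dl ?s k"
    by (simp add: loss_shift_def volt_def power2_eq_square algebra_simps)
qed

lemma strict_soc_slack:
  fixes P Q v l a b :: real
  assumes "P\<^sup>2 + Q\<^sup>2 < v * l"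
  shows "\<exists>e>0. (P - a * e / 2)\<^sup>2 + (Q - b * e / 2)\<^sup>2 \<le> v * (l - e)"
proof -
  let ?f = "\<lambda>e. (P - a * e / 2)\<^sup>2 + (Q - b * e / 2)\<^sup>2 - v * (l - e)"
  have "isCont ?f 0"
    by (intro continuous_intros) auto
  then have "(?f \<longlongrightarrow> ?f 0) (at_right 0)"
    unfolding isCont_def by (rule filterlim_mono[OF _ order_refl at_le]) simp
  moreover have "?f 0 < 0" using assms by simp
  ultimately have "\<forall>\<^sub>F e in at_right 0. ?f e < 0" by (rule order_tendstoD)
  then have "\<forall>\<^sub>F e in at_right (0::real). e > 0 \<and> ?f e < 0"
    using eventually_at_right_less by (rule eventually_conj[rotated])
  then obtain e :: real where "e > 0" "?f e < 0"
    using eventually_happens'[OF trivial_limit_at_right_real] by blast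
  then show ?thesis by (intro exI[of _ e]) simp
qed

lemma feasible_df_diff_loss_shift:
  assumes feas: "feasible n T d pb qb z g" and i: "i \<in> {1..n}"
    and nonneg: "r i \<ge> 0" "x i \<ge> 0" "e \<ge> 0"
    and soc: "(dP z i - r i * e / 2)\<^sup>2 + (dQ z i - x i * e / 2)\<^sup>2 \<le> dv z i * (dl z i - e)"
    and span: "\<forall>j<6*n+1. stack n (loss_shift par r x i e) j = (\<Sum>t<T. h t * stack n (d t) j)"
  shows "feasible n T d pb qb (df_diff z (loss_shift par r x i e)) (\<lambda>t. g t - h t)"
proof -
  let ?z = "df_diff z (loss_shift par r x i e)"
  have "dp ?z k \<le> dp z k" "dq ?z k \<le> dq z k" for k
    using nonneg by (simp_all add: df_diff_def loss_shift_def)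
  then have "\<forall>k\<in>{1..n}. dp ?z k \<le> pb k \<and> dq ?z k \<le> qb k"
    using feas unfolding feasible_def by (meson order_trans)
  moreover have "\<forall>k\<in>{1..n}. (dP ?z k)\<^sup>2 + (dQ ?z k)\<^sup>2 \<le> dv ?z k * dl ?z k"
    using feas soc by (auto simp: feasible_def df_diff_def loss_shift_def)
  moreover have "\<forall>j<6*n+1. stack n ?z j = (\<Sum>t<T. (g t - h t) * stack n (d t) j)"
    using feas span by (simp add: feasible_def stack_df_diff left_diff_distrib sum_subtractf)
  ultimately show ?thesis
    using feas by (simp add: feasible_def df_diff_def loss_shift_def)
qed

lemma objective_df_diff_loss_shift:
  assumes "i \<in> {1..n}"
  shows "objective n (df_diff z (loss_shift par r x i e)) = objective n z - e"
  using assms by (simp add: objective_def df_diff_def loss_shift_def sum_subtractf)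

theorem lemma3:
  fixes n T :: nat and par :: "nat \<Rightarrow> nat" and r x pb qb :: "nat \<Rightarrow> real"
    and d :: "nat \<Rightarrow> df_point" and z :: df_point and g :: "nat \<Rightarrow> real"
  assumes tree: "is_tree n par"
    and rx: "\<forall>i\<in>{1..n}. r i \<ge> 0 \<and> x i \<ge> 0 \<and> (r i)\<^sup>2 + (x i)\<^sup>2 \<noteq> 0"
    and T: "T > 1"
    and data: "\<forall>t<T. in_BDF n par r x (d t)"
    and rank: "mat_rank (6*n+1) T (\<lambda>t. stack n (d t)) = 3*n+1"
    and feas: "feasible n T d pb qb z g"
    and opt: "\<forall>z' g'. feasible n T d pb qb z' g' \<longrightarrow> objective n z \<le> objective n z'"
  shows "\<forall>i\<in>{1..n}. (dP z i)\<^sup>2 + (dQ z i)\<^sup>2 = dv z i * dl z i"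
proof (rule ccontr)
  assume "\<not> ?thesis"
  then obtain i where i: "i \<in> {1..n}" and "(dP z i)\<^sup>2 + (dQ z i)\<^sup>2 < dv z i * dl z i"
    using feas by (force simp: feasible_def order_le_less)
  then obtain e where e: "e > 0"
    and soc: "(dP z i - r i * e / 2)\<^sup>2 + (dQ z i - x i * e / 2)\<^sup>2 \<le> dv z i * (dl z i - e)"
    using strict_soc_slack by blast
  obtain h where "\<forall>j<6*n+1. stack n (loss_shift par r x i e) j = (\<Sum>t<T. h t * stack n (d t) j)"
    using in_lin_BDF_in_data_span[OF tree _ rank in_lin_BDF_loss_shift[OF tree i]]
      data in_BDF_imp_in_lin_BDF by blast
  then have "feasible n T d pb qb (df_diff z (loss_shift par r x i e)) (\<lambda>t. g t - h t)"
    using rx i e soc by (intro feasible_df_diff_loss_shift[OF feas i]) auto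
  then have "objective n z \<le> objective n z - e"
    using opt objective_df_diff_loss_shift[OF i] by metis
  with e show False by simp
qed

end
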